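(* (i) For integers $p\geq 0$, $k\geq p+1$ and $n\geq 2k-p+2$, $q(M_{n,n-1}^{n-k-1,k-p})>q(M_{n,n-1}^{k-p,n-k-1})$. (ii) For integers $p\geq 0$, $k\geq p+2$ and $n\geq 2k-p+2$, $q(M_{n,n-1}^{n-k,k-p-1})>q(M_{n,n-1}^{n-k-1,k-p})$.
   Context: $q$ denotes the largest eigenvalue of $D+A$ (diagonal degree matrix plus adjacency matrix). $M_{n,m}^{s,t}$: bipartite graph with parts $X=X_1\cup X_2$, $Y=Y_1\cup Y_2$, $|X_1|=s$, $|X_2|=n-s$, $|Y_1|=m-t$, $|Y_2|=t$; edges are all pairs between $X_1$ and $Y_1$, between $X_2$ and $Y_1$, and between $X_2$ and $Y_2$. *)

theory Defs
  imports "Jordan_Normal_Form.Char_Poly"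
begin

text \<open>Vertex i < n is in X
  (X1 = {i. i < s}, X2 = {i. s \<le> i < n}); vertex n + j with j < m is in Y
  (Y1 = {n+j. j < m - t}, Y2 = {n+j. m - t \<le> j < m}).
  Edges: X1--Y1, X2--Y1, X2--Y2.\<close>

definition XY_edge :: "nat \<Rightarrow> nat \<Rightarrow> nat \<Rightarrow> nat \<Rightarrow> nat \<Rightarrow> nat \<Rightarrow> bool" where
  "XY_edge n m s t x y \<longleftrightarrow> x < n \<and> n \<le> y \<and> y < n + m \<and>
     ((x < s \<and> y - n < m - t) \<or> (s \<le> x \<and> y - n < m - t) \<or> (s \<le> x \<and> m - t \<le> y - n))"

definition M_adj :: "nat \<Rightarrow> nat \<Rightarrow> nat \<Rightarrow> nat \<Rightarrow> nat \<Rightarrow> nat \<Rightarrow> bool" where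
  "M_adj n m s t u v \<longleftrightarrow> XY_edge n m s t u v \<or> XY_edge n m s t v u"

definition signless_laplacian :: "nat \<Rightarrow> (nat \<Rightarrow> nat \<Rightarrow> bool) \<Rightarrow> real mat" where
  "signless_laplacian N adj = mat N N (\<lambda>(i, j).
     (if i = j then real (card {k. k < N \<and> adj i k}) else 0) + (if adj i j then 1 else 0))"

definition largest_eigenvalue :: "real mat \<Rightarrow> real" where
  "largest_eigenvalue A = Max {k. eigenvalue A k}"

definition qM :: "nat \<Rightarrow> nat \<Rightarrow> nat \<Rightarrow> nat \<Rightarrow> real" where
  "qM n m s t = largest_eigenvalue (signless_laplacian (n + m) (M_adj n m s t))"

end

theory Submission
  imports Defs
begin

(* The partition X1, X2, Y1, Y2 of M is equitable, so every root of the characteristic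
   polynomial of its 4x4 quotient matrix is an eigenvalue of D + A, with an eigenvector
   that is constant on the four blocks.  Above m + |X2| this eigenvector is positive, and a
   positive eigenvector belongs to the largest eigenvalue; since the quotient polynomial is
   negative at m + |X2| and positive at n + m, q(M) is its root in between.  In both parts
   the quotient polynomials of the two graphs differ by an explicit multiple of x that is
   negative at the q of the first graph, so the polynomial of the second graph is negative
   there too and has a root, hence an eigenvalue, beyond it. *)

definition block_vec :: "nat \<Rightarrow> nat \<Rightarrow> nat \<Rightarrow> real \<Rightarrow> real \<Rightarrow> real \<Rightarrow> real \<Rightarrow> nat \<Rightarrow> real" where
  "block_vec s1 s2 r1 a b c d i =
     (if i < s1 then a else if i < s1 + s2 then b else if i < s1 + s2 + r1 then c else d)"

abbreviation M_laplacian :: "nat \<Rightarrow> nat \<Rightarrow> nat \<Rightarrow> nat \<Rightarrow> real mat" where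
  "M_laplacian s1 s2 r1 r2 \<equiv>
     signless_laplacian (s1 + s2 + (r1 + r2)) (M_adj (s1 + s2) (r1 + r2) s1 r2)"

lemma M_laplacian_carrier:
  "M_laplacian s1 s2 r1 r2 \<in> carrier_mat (s1 + s2 + (r1 + r2)) (s1 + s2 + (r1 + r2))"
  unfolding signless_laplacian_def by simp

lemma M_laplacian_nonneg:
  "i < s1 + s2 + (r1 + r2) \<Longrightarrow> j < s1 + s2 + (r1 + r2) \<Longrightarrow> M_laplacian s1 s2 r1 r2 $$ (i, j) \<ge> 0"
  unfolding signless_laplacian_def by simp

lemma M_adj_neighbours:
  assumes "i < s1 + s2 + (r1 + r2)"
  shows "{j. j < s1 + s2 + (r1 + r2) \<and> M_adj (s1 + s2) (r1 + r2) s1 r2 i j} =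
    (if i < s1 then {s1 + s2..<s1 + s2 + r1}
     else if i < s1 + s2 then {s1 + s2..<s1 + s2 + (r1 + r2)}
     else if i < s1 + s2 + r1 then {0..<s1 + s2} else {s1..<s1 + s2})"
  using assms unfolding M_adj_def XY_edge_def by (auto simp: less_diff_conv)

lemma signless_laplacian_mult_vec_index:
  fixes f :: "nat \<Rightarrow> real"
  assumes "i < N"
  shows "(signless_laplacian N adj *\<^sub>v vec N f) $ i =
     real (card {k. k < N \<and> adj i k}) * f i + (\<Sum>j\<in>{k. k < N \<and> adj i k}. f j)"
proof -
  have "(signless_laplacian N adj *\<^sub>v vec N f) $ i =
     (\<Sum>j<N. (if i = j then real (card {k. k < N \<and> adj i k}) * f j else 0)
            + (if adj i j then f j else 0))"
    using assms unfolding signless_laplacian_def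
    by (auto simp: scalar_prod_def lessThan_atLeast0 distrib_right intro!: sum.cong)
  also have "\<dots> = real (card {k. k < N \<and> adj i k}) * f i + (\<Sum>j\<in>{k. k < N \<and> adj i k}. f j)"
    using assms by (simp add: sum.distrib sum.inter_filter[symmetric] Collect_conj_eq lessThan_def)
  finally show ?thesis .
qed

lemma M_laplacian_mult_block_vec:
  fixes s1 s2 r1 r2 :: nat and a b c d :: real
  defines "n \<equiv> s1 + s2" and "m \<equiv> r1 + r2"
  assumes i: "i < n + m"
  shows "(M_laplacian s1 s2 r1 r2 *\<^sub>v vec (n + m) (block_vec s1 s2 r1 a b c d)) $ i =
    (if i < s1 then r1 * a + r1 * c
     else if i < n then m * b + r1 * c + r2 * d
     else if i < n + r1 then n * c + s1 * a + s2 * b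
     else s2 * d + s2 * b)"
proof -
  let ?f = "block_vec s1 s2 r1 a b c d"
  have const: "sum ?f {u..<v} = real (v - u) * y" if "\<And>j. u \<le> j \<Longrightarrow> j < v \<Longrightarrow> ?f j = y" for u v y
    using that by (simp add: sum.cong[of _ _ ?f "\<lambda>_. y"])
  have X1: "sum ?f {0..<s1} = s1 * a"
    using const[of 0 s1 a] by (simp add: block_vec_def)
  have X2: "sum ?f {s1..<n} = s2 * b"
    using const[of s1 n b] by (simp add: block_vec_def n_def)
  have Y1: "sum ?f {n..<n + r1} = r1 * c"
    using const[of n "n + r1" c] by (simp add: block_vec_def n_def)
  have Y2: "sum ?f {n + r1..<n + m} = r2 * d"
    using const[of "n + r1" "n + m" d] by (simp add: block_vec_def n_def m_def)
  have X: "sum ?f {0..<n} = s1 * a + s2 * b"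
    using sum.atLeastLessThan_concat[of 0 s1 n ?f] X1 X2 by (simp add: n_def)
  have Y: "sum ?f {n..<n + m} = r1 * c + r2 * d"
    using sum.atLeastLessThan_concat[of n "n + r1" "n + m" ?f] Y1 Y2 by (simp add: m_def)
  have row: "(M_laplacian s1 s2 r1 r2 *\<^sub>v vec (n + m) ?f) $ i =
      real (card {k. k < n + m \<and> M_adj n m s1 r2 i k}) * ?f i
      + sum ?f {k. k < n + m \<and> M_adj n m s1 r2 i k}"
    unfolding n_def m_def by (rule signless_laplacian_mult_vec_index[OF i[unfolded n_def m_def]])
  have nb: "{k. k < n + m \<and> M_adj n m s1 r2 i k} =
    (if i < s1 then {n..<n + r1} else if i < n then {n..<n + m}
     else if i < n + r1 then {0..<n} else {s1..<n})"
    unfolding n_def m_def by (rule M_adj_neighbours[OF i[unfolded n_def m_def]])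
  show ?thesis
    unfolding row nb using i X Y X2 Y1 by (auto simp: block_vec_def n_def m_def)
qed

(* Collatz-Wielandt: compare the eigen-equation of v with that of w at an index where
   |v j| / w j is maximal. *)
lemma eigenvalue_le_if_pos_eigenvector:
  fixes A :: "real mat"
  assumes A: "A \<in> carrier_mat N N"
    and nonneg: "\<And>i j. i < N \<Longrightarrow> j < N \<Longrightarrow> A $$ (i, j) \<ge> 0"
    and w: "w \<in> carrier_vec N" and w_pos: "\<And>i. i < N \<Longrightarrow> w $ i > 0"
    and Aw: "A *\<^sub>v w = \<rho> \<cdot>\<^sub>v w"
    and ev: "eigenvalue A \<mu>"
  shows "\<mu> \<le> \<rho>"
proof -
  from ev A obtain v where v: "v \<in> carrier_vec N" "v \<noteq> 0\<^sub>v N" and Av: "A *\<^sub>v v = \<mu> \<cdot>\<^sub>v v"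
    unfolding eigenvalue_def eigenvector_def by auto
  obtain i1 where i1: "i1 < N" "v $ i1 \<noteq> 0"
    using v by (metis eq_vecI index_zero_vec(1,2) carrier_vecD)
  define g where "g j = \<bar>v $ j\<bar> / w $ j" for j
  have fin: "finite (g ` {..<N})" "g ` {..<N} \<noteq> {}" using i1 by auto
  obtain i0 where i0: "i0 < N" "g i0 = Max (g ` {..<N})"
    using Max_in[OF fin] by auto
  have g_max: "g j \<le> g i0" if "j < N" for j
    using Max_ge[OF fin(1)] that i0(2) by simp
  define C where "C = g i0"
  have v_le: "\<bar>v $ j\<bar> \<le> C * w $ j" if "j < N" for j
    using g_max[OF that] w_pos[OF that] unfolding g_def C_def by (simp add: divide_le_eq)
  have v_i0: "\<bar>v $ i0\<bar> = C * w $ i0"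
    using w_pos[OF i0(1)] unfolding g_def C_def by simp
  have "0 < g i1" unfolding g_def using i1 w_pos[OF i1(1)] by simp
  then have "0 < \<bar>v $ i0\<bar>" using g_max[OF i1(1)] v_i0 w_pos[OF i0(1)] unfolding C_def by simp
  have "\<bar>\<mu>\<bar> * \<bar>v $ i0\<bar> = \<bar>\<Sum>j<N. A $$ (i0, j) * v $ j\<bar>"
    using arg_cong[OF Av, of "\<lambda>u. u $ i0"] A v i0
    by (simp add: abs_mult scalar_prod_def lessThan_atLeast0)
  also have "\<dots> \<le> (\<Sum>j<N. A $$ (i0, j) * (C * w $ j))"
    using nonneg[OF i0(1)] v_le
    by (intro order.trans[OF sum_abs] sum_mono) (simp add: abs_mult mult_left_mono)
  also have "\<dots> = C * (\<Sum>j<N. A $$ (i0, j) * w $ j)"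
    by (simp add: sum_distrib_left algebra_simps)
  also have "\<dots> = \<rho> * \<bar>v $ i0\<bar>"
    using arg_cong[OF Aw, of "\<lambda>u. u $ i0"] A w i0 v_i0
    by (simp add: scalar_prod_def lessThan_atLeast0)
  finally have "\<bar>\<mu>\<bar> \<le> \<rho>" using \<open>0 < \<bar>v $ i0\<bar>\<close> by simp
  then show ?thesis by simp
qed

lemma finite_eigenvalues:
  fixes A :: "real mat"
  assumes A: "A \<in> carrier_mat N N"
  shows "finite {k. eigenvalue A k}"
proof -
  have "char_poly A \<noteq> 0" using degree_monic_char_poly[OF A] by auto
  then have "finite {k. poly (char_poly A) k = 0}" by (rule poly_roots_finite)
  then show ?thesis using eigenvalue_root_char_poly[OF A] by simp
qed

(* det (x I - B) for the quotient matrix B of D + A with respect to the blocks X1, X2, Y1, Y2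
   of sizes s, n - s, m - t, t; the subtractions are taken in the reals. *)
definition quot_char :: "nat \<Rightarrow> nat \<Rightarrow> nat \<Rightarrow> nat \<Rightarrow> real \<Rightarrow> real" where
  "quot_char n m s t x =
     ((x - m) * (x - (real n - s)) - t * (real n - s)) * ((x - n) * (x - (real m - t)) - s * (real m - t))
     - (real m - t) * (real n - s) * (x - (real n - s)) * (x - (real m - t))"

lemma quot_char_at_vertex_count: "quot_char n m s t (real n + m) = (real n + m)\<^sup>2 * s * t"
  by (simp add: quot_char_def power2_eq_square algebra_simps)

lemma quot_char_at_m_plus_card_X2:
  "quot_char n m s t (m + (real n - s)) = - s * (real n - s) * (real m - t) * (m + (real n - s))"
  by (simp add: quot_char_def algebra_simps)

lemma quot_char_at_n_plus_card_Y1: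
  "quot_char n m s t (n + (real m - t)) = - t * (real m - t) * (real n - s) * (n + (real m - t))"
  by (simp add: quot_char_def algebra_simps)

lemma quot_char_swap:
  "quot_char n m t s x = quot_char n m s t x + (real t - s) * (real n - m) * x * (x - (real n + m))"
  by (simp add: quot_char_def algebra_simps)

lemma quot_char_shift:
  "quot_char n m (s + 1) t x =
     quot_char n m s (t + 1) x + x * ((real n - m - 2 * (real s - t)) * x - (real n + m) * (real n - m - (real s - t)))"
  by (simp add: quot_char_def algebra_simps)

lemma quot_char_root_between:
  assumes "quot_char n m s t l < 0" "quot_char n m s t u > 0" "l \<le> u"
  obtains x where "l < x" "x < u" "quot_char n m s t x = 0"
proof -
  have "continuous_on {l..u} (quot_char n m s t)"
    unfolding quot_char_def by (intro continuous_intros)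
  then obtain x where "l \<le> x" "x \<le> u" "quot_char n m s t x = 0"
    using IVT'[of "quot_char n m s t" l 0 u] assms by force
  moreover have "x \<noteq> l" "x \<noteq> u" using assms calculation by auto
  ultimately show thesis using that by force
qed

(* The eigenvector of the quotient matrix for x, scaled by (x - s2) (x - r1) to avoid division. *)
definition root_vec :: "nat \<Rightarrow> nat \<Rightarrow> nat \<Rightarrow> nat \<Rightarrow> real \<Rightarrow> real vec" where
  "root_vec s1 s2 r1 r2 x = (let P = (x - (r1 + r2)) * (x - s2) - real r2 * s2 in
     vec (s1 + s2 + (r1 + r2))
       (block_vec s1 s2 r1 (r1 * P) (r1 * (x - s2) * (x - r1)) (P * (x - r1)) (s2 * r1 * (x - r1))))"

lemma root_vec_carrier: "root_vec s1 s2 r1 r2 x \<in> carrier_vec (s1 + s2 + (r1 + r2))"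
  by (simp add: root_vec_def Let_def)

lemma M_laplacian_mult_root_vec:
  assumes root: "quot_char (s1 + s2) (r1 + r2) s1 r2 x = 0"
  shows "M_laplacian s1 s2 r1 r2 *\<^sub>v root_vec s1 s2 r1 r2 x = x \<cdot>\<^sub>v root_vec s1 s2 r1 r2 x"
proof (rule eq_vecI)
  define P :: real where "P = (x - (r1 + r2)) * (x - s2) - real r2 * s2"
  define a b c d :: real where "a = r1 * P" and "b = r1 * (x - s2) * (x - r1)"
    and "c = P * (x - r1)" and "d = s2 * r1 * (x - r1)"
  have v: "root_vec s1 s2 r1 r2 x = vec (s1 + s2 + (r1 + r2)) (block_vec s1 s2 r1 a b c d)"
    by (simp add: root_vec_def P_def a_def b_def c_def d_def Let_def)
  \<comment> \<open>only the Y1 rows use that x is a root; the other rows hold identically\<close>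
  have "x * c - ((real s1 + s2) * c + s1 * a + s2 * b) = quot_char (s1 + s2) (r1 + r2) s1 r2 x"
    by (simp add: quot_char_def a_def b_def c_def P_def algebra_simps)
  then have Y1: "(real s1 + s2) * c + s1 * a + s2 * b = x * c" using root by simp
  fix i assume "i < dim_vec (x \<cdot>\<^sub>v root_vec s1 s2 r1 r2 x)"
  then have i: "i < s1 + s2 + (r1 + r2)" by (simp add: v)
  show "(M_laplacian s1 s2 r1 r2 *\<^sub>v root_vec s1 s2 r1 r2 x) $ i = (x \<cdot>\<^sub>v root_vec s1 s2 r1 r2 x) $ i"
    using M_laplacian_mult_block_vec[OF i, of a b c d] i Y1 unfolding v
    by (auto simp: block_vec_def a_def b_def c_def d_def P_def algebra_simps)
qed (simp add: root_vec_def signless_laplacian_def Let_def)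

lemma root_vec_pos:
  fixes x :: real
  assumes "0 < s2" "0 < r1" "r1 + r2 + s2 < x" "i < s1 + s2 + (r1 + r2)"
  shows "0 < root_vec s1 s2 r1 r2 x $ i"
proof -
  have "real s2 * (r1 + r2) < (x - (r1 + r2)) * (x - s2)"
    using assms(1-3) by (intro mult_strict_mono) auto
  moreover have "(x - (r1 + r2)) * (x - s2) - real r2 * s2
      = ((x - (r1 + r2)) * (x - s2) - real s2 * (r1 + r2)) + real r1 * s2"
    by (simp add: algebra_simps)
  ultimately have "0 < (x - (r1 + r2)) * (x - s2) - real r2 * s2"
    using mult_nonneg_nonneg[of "real r1" "real s2"] by linarith
  then show ?thesis using assms by (simp add: root_vec_def block_vec_def Let_def)
qed

lemma eigenvalue_M_laplacian_if_root:
  fixes x :: real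
  assumes "0 < s2" "0 < r1" "s2 < x" "r1 < x" "quot_char (s1 + s2) (r1 + r2) s1 r2 x = 0"
  shows "eigenvalue (M_laplacian s1 s2 r1 r2) x"
proof -
  have "root_vec s1 s2 r1 r2 x $ s1 = r1 * (x - s2) * (x - r1)"
    using assms(1) by (simp add: root_vec_def block_vec_def Let_def)
  then have "root_vec s1 s2 r1 r2 x \<noteq> 0\<^sub>v (s1 + s2 + (r1 + r2))"
    using assms(1-4) by auto
  then show ?thesis
    unfolding eigenvalue_def eigenvector_def
    using M_laplacian_mult_root_vec[OF assms(5)] root_vec_carrier
    by (intro exI[of _ "root_vec s1 s2 r1 r2 x"]) (auto simp: signless_laplacian_def)
qed

lemma qM_ge_root:
  fixes x :: real
  assumes "s < n" "t < m" "real n - s < x" "real m - t < x" "quot_char n m s t x = 0"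
  shows "x \<le> qM n m s t"
proof -
  obtain s2 r1 where n: "n = s + s2" and m: "m = r1 + t" and "0 < s2" "0 < r1"
    using assms(1,2) by (metis add.commute less_imp_add_positive)
  have "eigenvalue (M_laplacian s s2 r1 t) x"
    using assms(3-5) \<open>0 < s2\<close> \<open>0 < r1\<close>
    by (intro eigenvalue_M_laplacian_if_root) (simp_all add: n m)
  then show ?thesis
    unfolding qM_def largest_eigenvalue_def n m
    using finite_eigenvalues[OF M_laplacian_carrier] by (intro Max_ge) auto
qed

lemma qM_eq_root:
  fixes x :: real
  assumes "s < n" "t < m" "m + (real n - s) < x" "quot_char n m s t x = 0"
  shows "qM n m s t = x"
proof -
  obtain s2 r1 where n: "n = s + s2" and m: "m = r1 + t" and "0 < s2" "0 < r1"
    using assms(1,2) by (metis add.commute less_imp_add_positive)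
  have x: "real r1 + t + s2 < x" "quot_char (s + s2) (r1 + t) s t x = 0"
    using assms(3,4) by (simp_all add: n m)
  have "\<mu> \<le> x" if "eigenvalue (M_laplacian s s2 r1 t) \<mu>" for \<mu>
    using eigenvalue_le_if_pos_eigenvector[OF M_laplacian_carrier M_laplacian_nonneg root_vec_carrier
        root_vec_pos[OF \<open>0 < s2\<close> \<open>0 < r1\<close> x(1)] M_laplacian_mult_root_vec[OF x(2)] that] .
  moreover have "eigenvalue (M_laplacian s s2 r1 t) x"
    using x \<open>0 < s2\<close> \<open>0 < r1\<close> by (intro eigenvalue_M_laplacian_if_root) auto
  ultimately show ?thesis
    unfolding qM_def largest_eigenvalue_def n m
    using finite_eigenvalues[OF M_laplacian_carrier] by (intro Max_eqI) auto
qed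

lemma qM_root:
  assumes "0 < s" "s < n" "0 < t" "t < m"
  shows "quot_char n m s t (qM n m s t) = 0" and "real n < qM n m s t" and "real m < qM n m s t"
    and "qM n m s t < real n + m"
proof -
  have top: "quot_char n m s t (real n + m) > 0"
    using assms by (simp add: quot_char_at_vertex_count)
  have "quot_char n m s t (m + (real n - s)) < 0"
    using assms by (simp add: quot_char_at_m_plus_card_X2 mult_pos_pos)
  then obtain \<rho> :: real where \<rho>: "m + (real n - s) < \<rho>" "\<rho> < real n + m" "quot_char n m s t \<rho> = 0"
    using top assms(1) by (elim quot_char_root_between) auto
  have "quot_char n m s t (n + (real m - t)) < 0"
    using assms by (simp add: quot_char_at_n_plus_card_Y1 mult_pos_pos)
  then obtain y :: real where y: "n + (real m - t) < y" "quot_char n m s t y = 0"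
    using top assms(3) by (elim quot_char_root_between) auto
  have "qM n m s t = \<rho>" using qM_eq_root[OF assms(2,4) \<rho>(1,3)] .
  moreover have "y \<le> qM n m s t"
    using assms y by (intro qM_ge_root) auto
  ultimately show "quot_char n m s t (qM n m s t) = 0" "real n < qM n m s t" "real m < qM n m s t"
    "qM n m s t < real n + m"
    using \<rho> y assms by auto
qed

lemma qM_less_if_quot_char_neg:
  assumes "0 < s" "s < n" "0 < t" "t < m" "0 < s'" "s' < n" "0 < t'" "t' < m"
    and neg: "quot_char n m s' t' (qM n m s t) < 0"
  shows "qM n m s t < qM n m s' t'"
proof -
  note q = qM_root[OF assms(1-4)]
  have "quot_char n m s' t' (real n + m) > 0"
    using assms(5-7) by (simp add: quot_char_at_vertex_count)
  then obtain y :: real where y: "qM n m s t < y" "quot_char n m s' t' y = 0"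
    using neg q(4) by (elim quot_char_root_between) auto
  have "y \<le> qM n m s' t'"
    using y q(2,3) assms(6,8) by (intro qM_ge_root) auto
  then show ?thesis using y(1) by simp
qed

lemma qM_less_qM_swap:
  assumes "0 < s" "s < t" "t < m" "m < n"
  shows "qM n m s t < qM n m t s"
proof (rule qM_less_if_quot_char_neg)
  define \<rho> where "\<rho> = qM n m s t"
  have q: "quot_char n m s t \<rho> = 0" "real n < \<rho>" "\<rho> < real n + m"
    using qM_root[of s n t m] assms unfolding \<rho>_def by auto
  have "0 < (real t - s) * (real n - m) * \<rho>"
    using assms q(2) by simp
  then have "(real t - s) * (real n - m) * \<rho> * (\<rho> - (real n + m)) < 0"
    using q(3) by (simp add: mult_pos_neg)
  then show "quot_char n m t s (qM n m s t) < 0"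
    unfolding \<rho>_def[symmetric] quot_char_swap[of n m t s] q(1) by simp
qed (use assms in auto)

lemma qM_less_qM_shift:
  assumes "0 < s" "0 < t" "s + 1 < n" "t + 1 < m" "m \<le> n" "n + 2 * t < m + 2 * s"
  shows "qM n m s (t + 1) < qM n m (s + 1) t"
proof (rule qM_less_if_quot_char_neg)
  define \<rho> where "\<rho> = qM n m s (t + 1)"
  have q: "quot_char n m s (t + 1) \<rho> = 0" "real n < \<rho>" "real m < \<rho>"
    using qM_root[of s n "t + 1" m] assms unfolding \<rho>_def by auto
  define c d where "c = real n - m" and "d = real s - t"
  have c: "0 \<le> c * (real n + m)" and cd: "0 < 2 * d - c"
    using assms(5,6) by (auto simp: c_def d_def)
  have "(2 * d - c) * (real n + m) < (2 * d - c) * (2 * \<rho>)"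
    using q(2,3) cd by (intro mult_strict_left_mono) auto
  then have "(c - 2 * d) * \<rho> - (real n + m) * (c - d) < 0"
    using c by (simp add: algebra_simps)
  then have "\<rho> * ((c - 2 * d) * \<rho> - (real n + m) * (c - d)) < 0"
    using q(2) by (simp add: mult_pos_neg)
  then show "quot_char n m (s + 1) t (qM n m s (t + 1)) < 0"
    unfolding \<rho>_def[symmetric] quot_char_shift[of n m s t] q(1) by (simp add: c_def d_def)
qed (use assms in auto)

theorem lemma5p2:
  fixes n k p :: nat
  shows "(p + 1 \<le> k \<and> 2 * k - p + 2 \<le> n \<longrightarrow>
            qM n (n - 1) (n - k - 1) (k - p) > qM n (n - 1) (k - p) (n - k - 1))
       \<and> (p + 2 \<le> k \<and> 2 * k - p + 2 \<le> n \<longrightarrow>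
            qM n (n - 1) (n - k) (k - p - 1) > qM n (n - 1) (n - k - 1) (k - p))"
proof (intro conjI impI)
  assume bounds: "p + 1 \<le> k \<and> 2 * k - p + 2 \<le> n"
  show "qM n (n - 1) (n - k - 1) (k - p) > qM n (n - 1) (k - p) (n - k - 1)"
    by (rule qM_less_qM_swap) (use bounds in linarith)+
next
  assume bounds: "p + 2 \<le> k \<and> 2 * k - p + 2 \<le> n"
  have "qM n (n - 1) (n - k - 1) (k - p - 1 + 1) < qM n (n - 1) (n - k - 1 + 1) (k - p - 1)"
    by (rule qM_less_qM_shift) (use bounds in linarith)+
  moreover have "k - p - 1 + 1 = k - p" "n - k - 1 + 1 = n - k"
    using bounds by linarith+
  ultimately show "qM n (n - 1) (n - k) (k - p - 1) > qM n (n - 1) (n - k - 1) (k - p)"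
    by (simp only:)
qed

end
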